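(* Let $(G,\cdot,\curlywedge,\xi,\delta)$ satisfy the standing assumptions below. A non-empty subset $H\subseteq G$ is $f_\xi$-closed if and only if for all $x,y,g_1,g_2\in G$: (i) $xy\in H\Rightarrow x\in H$; (ii) $g_1\vdash g_2\wedge g_1\in H\Rightarrow g_1g_2\in H$; (iii) $g_1\curlywedge g_2=g_1\in H\Rightarrow g_2\in H$; (iv) $g_1\downarrow g_2\wedge g_1\in H\wedge g_2x\in H\Rightarrow (g_1\curlywedge g_2)x\in H$, where in (iv) $x$ may also be the empty symbol (i.e. (iv) also holds with $x$ deleted).
   Context: Standing assumptions: $(G,\cdot)$ is a semigroup, $(G,\curlywedge)$ a semilattice on $G$, $\xi,\delta\subseteq G\times G$. Write $x\leqslant y$ iff $x\curlywedge y=x$ (semilattice order $\zeta$), $x\downarrow y$ iff $(x,y)\in\xi$, $x\vdash y$ iff $(x,y)\in\delta$. Assume $\xi$ is left regular ($(u,v)\in\xi\Rightarrow(xu,xv)\in\xi$), $\zeta\subseteq\xi$, $\delta$ is a left ideal ($(x,y)\in\delta\Rightarrow(ux,y)\in\delta$), and for all $x,y,z,u,v\in G$: $x(y\curlywedge z)=xy\curlywedge xz$; $x\leqslant y\wedge u\leqslant v\wedge y\downarrow v\Rightarrow u\downarrow x$; $x\downarrow y\Rightarrow(x\curlywedge y)u=xu\curlywedge yu$. $G^*=G\cup\{e\}$ is $(G,\cdot)$ with a new identity $e$ adjoined, with conventions $e\leqslant e$, $e\vdash e$, $x\vdash e$ for all $x\in G$. $a\boxdot b\leqslant c$ abbreviates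 $a\vdash b\wedge ab\leqslant c$. A subset $H\subseteq G$ is $f_\xi$-closed if for all $x,y,t\in G^*$ and $z,u,v\in G$: $u\downarrow v\wedge(u\curlywedge v)x\boxdot y\leqslant zt\wedge u\in H\wedge vx\in H\Rightarrow z\in H$. *)

theory Defs
  imports Main
begin

text \<open>The carrier G is the whole type 'a; mult is the semigroup product,
  meet the semilattice operation, xi and delta the two relations.
  G* = G \<union> {e} is modelled as 'a option, with None playing the role of e.\<close>

definition standing_assms ::
  "('a \<Rightarrow> 'a \<Rightarrow> 'a) \<Rightarrow> ('a \<Rightarrow> 'a \<Rightarrow> 'a) \<Rightarrow> ('a \<times> 'a) set \<Rightarrow> ('a \<times> 'a) set \<Rightarrow> bool" where
  "standing_assms mult meet xi delta \<longleftrightarrow>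
     (\<forall>x y z. mult (mult x y) z = mult x (mult y z)) \<and>
     (\<forall>x y z. meet (meet x y) z = meet x (meet y z)) \<and>
     (\<forall>x y. meet x y = meet y x) \<and>
     (\<forall>x. meet x x = x) \<and>
     (\<forall>x u v. (u, v) \<in> xi \<longrightarrow> (mult x u, mult x v) \<in> xi) \<and>
     (\<forall>x y. meet x y = x \<longrightarrow> (x, y) \<in> xi) \<and>
     (\<forall>x y u. (x, y) \<in> delta \<longrightarrow> (mult u x, y) \<in> delta) \<and>
     (\<forall>x y z. mult x (meet y z) = meet (mult x y) (mult x z)) \<and>
     (\<forall>x y u v. meet x y = x \<and> meet u v = u \<and> (y, v) \<in> xi \<longrightarrow> (u, x) \<in> xi) \<and>
     (\<forall>x y u. (x, y) \<in> xi \<longrightarrow> mult (meet x y) u = meet (mult x u) (mult y u))"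

fun emul :: "('a \<Rightarrow> 'a \<Rightarrow> 'a) \<Rightarrow> 'a option \<Rightarrow> 'a option \<Rightarrow> 'a option" where
  "emul mult None y = y"
| "emul mult (Some a) None = Some a"
| "emul mult (Some a) (Some b) = Some (mult a b)"

fun ele :: "('a \<Rightarrow> 'a \<Rightarrow> 'a) \<Rightarrow> 'a option \<Rightarrow> 'a option \<Rightarrow> bool" where
  "ele meet (Some a) (Some b) = (meet a b = a)"
| "ele meet None None = True"
| "ele meet _ _ = False"

fun evd :: "('a \<times> 'a) set \<Rightarrow> 'a option \<Rightarrow> 'a option \<Rightarrow> bool" where
  "evd delta (Some a) (Some b) = ((a, b) \<in> delta)"
| "evd delta _ None = True"
| "evd delta None (Some _) = False"

definition boxdot_le ::
  "('a \<Rightarrow> 'a \<Rightarrow> 'a) \<Rightarrow> ('a \<Rightarrow> 'a \<Rightarrow> 'a) \<Rightarrow> ('a \<times> 'a) set \<Rightarrow> 'a option \<Rightarrow> 'a option \<Rightarrow> 'a option \<Rightarrow> bool" where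
  "boxdot_le mult meet delta a b c \<longleftrightarrow> evd delta a b \<and> ele meet (emul mult a b) c"

definition f_xi_closed ::
  "('a \<Rightarrow> 'a \<Rightarrow> 'a) \<Rightarrow> ('a \<Rightarrow> 'a \<Rightarrow> 'a) \<Rightarrow> ('a \<times> 'a) set \<Rightarrow> ('a \<times> 'a) set \<Rightarrow> 'a set \<Rightarrow> bool" where
  "f_xi_closed mult meet xi delta H \<longleftrightarrow>
     (\<forall>(x::'a option) (y::'a option) (t::'a option) (z::'a) (u::'a) (v::'a).
        (u, v) \<in> xi \<and>
        boxdot_le mult meet delta (emul mult (Some (meet u v)) x) y (emul mult (Some z) t) \<and>
        u \<in> H \<and> emul mult (Some v) x \<in> Some ` H
        \<longrightarrow> z \<in> H)"

end

theory Submission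
  imports Defs
begin

text \<open>Taking the adjoined identity for some of x, y, t turns the defining implication of
  f_xi-closedness into each of the conditions (i)-(iv) separately. Conversely, an
  instance of the defining implication is a chain of memberships in H,
  from u, v x to (u \<curlywedge> v) x, (u \<curlywedge> v) x y, z t and finally z, each link given by one of the
  conditions (and trivial where the adjoined identity occurs).\<close>

definition closure_conditions ::
  "('a \<Rightarrow> 'a \<Rightarrow> 'a) \<Rightarrow> ('a \<Rightarrow> 'a \<Rightarrow> 'a) \<Rightarrow> ('a \<times> 'a) set \<Rightarrow> ('a \<times> 'a) set \<Rightarrow> 'a set \<Rightarrow> bool" where
  "closure_conditions mult meet xi delta H \<longleftrightarrow>
     (\<forall>x y. mult x y \<in> H \<longrightarrow> x \<in> H) \<and>
     (\<forall>g1 g2. (g1, g2) \<in> delta \<and> g1 \<in> H \<longrightarrow> mult g1 g2 \<in> H) \<and>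
     (\<forall>g1 g2. meet g1 g2 = g1 \<and> g1 \<in> H \<longrightarrow> g2 \<in> H) \<and>
     (\<forall>g1 g2 x. (g1, g2) \<in> xi \<and> g1 \<in> H \<and> mult g2 x \<in> H \<longrightarrow> mult (meet g1 g2) x \<in> H) \<and>
     (\<forall>g1 g2. (g1, g2) \<in> xi \<and> g1 \<in> H \<and> g2 \<in> H \<longrightarrow> meet g1 g2 \<in> H)"

lemma standing_assms_meet_idem:
  assumes "standing_assms mult meet xi delta"
  shows "meet a a = a"
  using assms unfolding standing_assms_def by blast

lemma standing_assms_xi_refl:
  assumes "standing_assms mult meet xi delta"
  shows "(a, a) \<in> xi"
  using assms unfolding standing_assms_def by metis

lemma f_xi_closedD:
  assumes "f_xi_closed mult meet xi delta H"
    and "(u, v) \<in> xi" "u \<in> H" "emul mult (Some v) x \<in> Some ` H"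
    and "boxdot_le mult meet delta (emul mult (Some (meet u v)) x) y (emul mult (Some z) t)"
  shows "z \<in> H"
  using assms unfolding f_xi_closed_def by blast

lemma f_xi_closed_imp_closure_conditions:
  assumes idem: "\<And>a. meet a a = a" and refl: "\<And>a. (a, a) \<in> xi"
    and closed: "f_xi_closed mult meet xi delta H"
  shows "closure_conditions mult meet xi delta H"
  unfolding closure_conditions_def
proof (intro conjI allI impI)
  fix x y assume "mult x y \<in> H"
  then show "x \<in> H"
    by (intro f_xi_closedD[OF closed, of "mult x y" "mult x y" None None x "Some y"])
      (auto simp: boxdot_le_def refl idem)
next
  fix g1 g2 assume "(g1, g2) \<in> delta \<and> g1 \<in> H"
  then show "mult g1 g2 \<in> H"
    by (intro f_xi_closedD[OF closed, of g1 g1 None "Some g2" "mult g1 g2" None])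
      (auto simp: boxdot_le_def refl idem)
next
  fix g1 g2 assume "meet g1 g2 = g1 \<and> g1 \<in> H"
  then show "g2 \<in> H"
    by (intro f_xi_closedD[OF closed, of g1 g1 None None g2 None])
      (auto simp: boxdot_le_def refl idem)
next
  fix g1 g2 x assume "(g1, g2) \<in> xi \<and> g1 \<in> H \<and> mult g2 x \<in> H"
  then show "mult (meet g1 g2) x \<in> H"
    by (intro f_xi_closedD[OF closed, of g1 g2 "Some x" None "mult (meet g1 g2) x" None])
      (auto simp: boxdot_le_def idem)
next
  fix g1 g2 assume "(g1, g2) \<in> xi \<and> g1 \<in> H \<and> g2 \<in> H"
  then show "meet g1 g2 \<in> H"
    by (intro f_xi_closedD[OF closed, of g1 g2 None None "meet g1 g2" None])
      (auto simp: boxdot_le_def idem)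
qed

lemma emul_meet_mem:
  assumes "\<forall>g1 g2 x. (g1, g2) \<in> xi \<and> g1 \<in> H \<and> mult g2 x \<in> H \<longrightarrow> mult (meet g1 g2) x \<in> H"
    and "\<forall>g1 g2. (g1, g2) \<in> xi \<and> g1 \<in> H \<and> g2 \<in> H \<longrightarrow> meet g1 g2 \<in> H"
    and "(u, v) \<in> xi" "u \<in> H" "emul mult (Some v) x \<in> Some ` H"
  shows "emul mult (Some (meet u v)) x \<in> Some ` H"
  using assms by (cases x) auto

lemma emul_evd_mem:
  assumes "\<forall>g1 g2. (g1, g2) \<in> delta \<and> g1 \<in> H \<longrightarrow> mult g1 g2 \<in> H"
    and "evd delta a y" "a \<in> Some ` H"
  shows "emul mult a y \<in> Some ` H"
  using assms by (cases y) auto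

lemma ele_upward_mem:
  assumes "\<forall>g1 g2. meet g1 g2 = g1 \<and> g1 \<in> H \<longrightarrow> g2 \<in> H"
    and "ele meet b c" "b \<in> Some ` H"
  shows "c \<in> Some ` H"
  using assms by (cases c) auto

lemma emul_prefix_mem:
  assumes "\<forall>x y. mult x y \<in> H \<longrightarrow> x \<in> H"
    and "emul mult (Some z) t \<in> Some ` H"
  shows "z \<in> H"
  using assms by (cases t) auto

lemma closure_conditions_imp_f_xi_closed:
  assumes "closure_conditions mult meet xi delta H"
  shows "f_xi_closed mult meet xi delta H"
  using assms unfolding closure_conditions_def
proof (elim conjE)
  assume prefix: "\<forall>x y. mult x y \<in> H \<longrightarrow> x \<in> H"
    and delta_step: "\<forall>g1 g2. (g1, g2) \<in> delta \<and> g1 \<in> H \<longrightarrow> mult g1 g2 \<in> H"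
    and upward: "\<forall>g1 g2. meet g1 g2 = g1 \<and> g1 \<in> H \<longrightarrow> g2 \<in> H"
    and meet_mult: "\<forall>g1 g2 x. (g1, g2) \<in> xi \<and> g1 \<in> H \<and> mult g2 x \<in> H
      \<longrightarrow> mult (meet g1 g2) x \<in> H"
    and meet: "\<forall>g1 g2. (g1, g2) \<in> xi \<and> g1 \<in> H \<and> g2 \<in> H \<longrightarrow> meet g1 g2 \<in> H"
  show "f_xi_closed mult meet xi delta H"
    unfolding f_xi_closed_def boxdot_le_def
  proof (intro allI impI, elim conjE)
    fix x y t z u v
    assume uv: "(u, v) \<in> xi" "u \<in> H" "emul mult (Some v) x \<in> Some ` H"
      and related: "evd delta (emul mult (Some (meet u v)) x) y"
      and below: "ele meet (emul mult (emul mult (Some (meet u v)) x) y) (emul mult (Some z) t)"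
    have "emul mult (Some (meet u v)) x \<in> Some ` H"
      by (rule emul_meet_mem[OF meet_mult meet uv])
    then have "emul mult (emul mult (Some (meet u v)) x) y \<in> Some ` H"
      by (rule emul_evd_mem[OF delta_step related])
    then have "emul mult (Some z) t \<in> Some ` H"
      by (rule ele_upward_mem[OF upward below])
    then show "z \<in> H"
      by (rule emul_prefix_mem[OF prefix])
  qed
qed

theorem proposition4:
  fixes mult meet :: "'a \<Rightarrow> 'a \<Rightarrow> 'a" and xi delta :: "('a \<times> 'a) set" and H :: "'a set"
  assumes "standing_assms mult meet xi delta"
    and "H \<noteq> {}"
  shows "f_xi_closed mult meet xi delta H \<longleftrightarrow>
    ((\<forall>x y. mult x y \<in> H \<longrightarrow> x \<in> H) \<and>
     (\<forall>g1 g2. (g1, g2) \<in> delta \<and> g1 \<in> H \<longrightarrow> mult g1 g2 \<in> H) \<and>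
     (\<forall>g1 g2. meet g1 g2 = g1 \<and> g1 \<in> H \<longrightarrow> g2 \<in> H) \<and>
     (\<forall>g1 g2 x. (g1, g2) \<in> xi \<and> g1 \<in> H \<and> mult g2 x \<in> H \<longrightarrow> mult (meet g1 g2) x \<in> H) \<and>
     (\<forall>g1 g2. (g1, g2) \<in> xi \<and> g1 \<in> H \<and> g2 \<in> H \<longrightarrow> meet g1 g2 \<in> H))"
  unfolding closure_conditions_def[symmetric]
proof
  have "meet a a = a" and "(a, a) \<in> xi" for a
    using assms(1) by (rule standing_assms_meet_idem, rule standing_assms_xi_refl)
  then show "f_xi_closed mult meet xi delta H \<Longrightarrow> closure_conditions mult meet xi delta H"
    by (rule f_xi_closed_imp_closure_conditions)
qed (rule closure_conditions_imp_f_xi_closed)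

end
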